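(* Let $l_n,R_n>0$ ($n\in\mathbb N$) satisfy $l_n,R_n\to\infty$, $l_n^2/n\to0$, $n/R_n\to0$, $e^{-\pi l_n/2}R_n\to0$, and for real $t\neq\pm n$ let $W_n(t)=\lim_{\varepsilon\downarrow0}W_n(t+i\varepsilon)$, where $W_n(z)=\exp\!\big(-l_n\pi-il_n\log\frac{z-n}{z+n}\big)$, $z\in\mathbb C_+$. Then $$\sup_n\Big|\int_{1<|t|<n}W_n(t)\,\frac{dt}{t}\Big|<\infty.$$
   Context: $\mathbb C_+=\{\operatorname{Im}z>0\}$; $\log$ denotes the branch with imaginary part in $(0,\pi)$ on $\mathbb C_+$. Explicitly, the boundary values are $W_n(t)=e^{-il_n\log|\frac{t-n}{t+n}|}$ for $|t|<n$ and $W_n(t)=e^{-l_n\pi-il_n\log|\frac{t-n}{t+n}|}$ for $|t|>n$. *)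

theory Defs
  imports "HOL-Analysis.Analysis"
begin

text \<open>Isabelle's principal logarithm Ln has imaginary part in (0,pi) on the upper
  half plane, and (z-n)/(z+n) lies in the upper half plane for Im z > 0,
  so Ln agrees with the branch used in the paper.\<close>
definition W_upper :: "real \<Rightarrow> nat \<Rightarrow> complex \<Rightarrow> complex" where
  "W_upper l n z = exp (- complex_of_real (l * pi)
      - \<i> * complex_of_real l * Ln ((z - of_nat n) / (z + of_nat n)))"

definition W_boundary :: "real \<Rightarrow> nat \<Rightarrow> real \<Rightarrow> complex" where
  "W_boundary l n t = Lim (at_right 0) (\<lambda>\<epsilon>::real. W_upper l n (complex_of_real t + \<i> * complex_of_real \<epsilon>))"

end

theory Submission
  imports Defs
begin

(*
  For |t| < n the boundary value is W_n(t) = exp (i l_n phi(t)) with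
  phi(t) = ln (n + t) - ln (n - t).  Since phi is odd, the integral over
  1 < |t| < n equals 2i times the integral of sin (l_n phi(t)) / t over [1, n].
  Split [1, n] at n / l_n and n / 2.  On [1, n / l_n], |sin (l_n phi(t))| <= l_n phi(t)
  <= 3 l_n t / n; on [n / l_n, n / 2] integrate by parts against psi = 1 / (t phi'),
  which is positive and decreasing, so the integral is at most 2 psi(n / l_n) / l_n <= 1;
  on [n / 2, n] the integrand is at most 2 / n.  Each piece is bounded once 2 <= l_n <= n, and this
  holds for all large n because l_n -> oo and l_n^2 / n -> 0.
*)

lemma integrable_on_Icc_if_bounded_continuous_on_Ioo:
  fixes f :: "real \<Rightarrow> 'a::euclidean_space"
  assumes "continuous_on {a<..<b} f" and "\<And>t. t \<in> {a<..<b} \<Longrightarrow> norm (f t) \<le> B"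
  shows "f integrable_on {a..b}"
proof -
  have "f \<in> borel_measurable (lebesgue_on {a<..<b})"
    using assms(1) by (rule continuous_imp_measurable_on_sets_lebesgue) simp
  moreover have "(\<lambda>_. B) integrable_on {a<..<b}"
    using integrable_const_ivl[of B a b] by (simp add: integrable_on_Icc_iff_Ioo)
  ultimately have "f integrable_on {a<..<b}"
    by (rule measurable_bounded_by_integrable_imp_integrable) (use assms(2) in auto)
  then show ?thesis by (simp add: integrable_on_Icc_iff_Ioo)
qed

lemma sin_oscillatory_integral_bound:
  fixes h h' \<psi> \<psi>' :: "real \<Rightarrow> real"
  assumes "a \<le> b" and "0 < L"
    and h: "\<And>t. t \<in> {a..b} \<Longrightarrow> (h has_real_derivative h' t) (at t within {a..b})"
    and \<psi>: "\<And>t. t \<in> {a..b} \<Longrightarrow> (\<psi> has_real_derivative \<psi>' t) (at t within {a..b})"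
    and \<psi>'_cont: "continuous_on {a..b} \<psi>'"
    and \<psi>'_nonpos: "\<And>t. t \<in> {a..b} \<Longrightarrow> \<psi>' t \<le> 0"
    and \<psi>_b: "0 \<le> \<psi> b"
  shows "\<bar>integral {a..b} (\<lambda>t. sin (L * h t) * h' t * \<psi> t)\<bar> \<le> 2 * \<psi> a / L"
proof -
  define F where "F t = - cos (L * h t) * \<psi> t / L" for t
  define r where "r t = cos (L * h t) * \<psi>' t / L" for t
  have "((\<lambda>t. sin (L * h t) * h' t * \<psi> t - r t) has_integral F b - F a) {a..b}"
  proof (rule fundamental_theorem_of_calculus[OF \<open>a \<le> b\<close>])
    fix t assume "t \<in> {a..b}"
    then have "(F has_real_derivative sin (L * h t) * h' t * \<psi> t - r t) (at t within {a..b})"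
      unfolding F_def r_def using \<open>0 < L\<close>
      by (auto intro!: derivative_eq_intros h \<psi> simp: field_simps)
    then show "(F has_vector_derivative sin (L * h t) * h' t * \<psi> t - r t) (at t within {a..b})"
      by (simp add: has_real_derivative_iff_has_vector_derivative)
  qed
  moreover have r_int: "r integrable_on {a..b}"
  proof -
    have "continuous_on {a..b} h"
      using h by (rule DERIV_continuous_on)
    then show ?thesis
      unfolding r_def using \<open>0 < L\<close>
      by (intro integrable_continuous_interval continuous_intros \<psi>'_cont) auto
  qed
  ultimately have "((\<lambda>t. (sin (L * h t) * h' t * \<psi> t - r t) + r t)
      has_integral F b - F a + integral {a..b} r) {a..b}"
    by (intro has_integral_add integrable_integral)
  then have integral_eq:
      "integral {a..b} (\<lambda>t. sin (L * h t) * h' t * \<psi> t) = F b - F a + integral {a..b} r"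
    by (simp add: integral_unique)
  have \<psi>'_int: "(\<psi>' has_integral \<psi> b - \<psi> a) {a..b}"
    using \<psi> by (intro fundamental_theorem_of_calculus[OF \<open>a \<le> b\<close>])
      (simp add: has_real_derivative_iff_has_vector_derivative)
  have "0 \<le> - (\<psi> b - \<psi> a)"
    using has_integral_neg[OF \<psi>'_int] by (rule has_integral_nonneg) (simp add: \<psi>'_nonpos)
  then have "\<psi> b \<le> \<psi> a" by simp
  have "\<bar>integral {a..b} r\<bar> \<le> integral {a..b} (\<lambda>t. - \<psi>' t / L)"
  proof (rule integral_norm_bound_integral[OF r_int, unfolded real_norm_def])
    show "(\<lambda>t. - \<psi>' t / L) integrable_on {a..b}"
      using \<psi>'_int by (intro integrable_neg integrable_on_divide) blast
    fix t assume "t \<in> {a..b}"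
    then have "\<bar>r t\<bar> = \<bar>cos (L * h t)\<bar> * (- \<psi>' t / L)"
      using \<psi>'_nonpos[of t] \<open>0 < L\<close> by (simp add: r_def abs_mult abs_divide)
    also have "\<dots> \<le> - \<psi>' t / L"
      using \<open>t \<in> {a..b}\<close> \<psi>'_nonpos[of t] \<open>0 < L\<close>
      by (intro mult_left_le_one_le) (auto simp: divide_nonpos_pos)
    finally show "\<bar>r t\<bar> \<le> - \<psi>' t / L" .
  qed
  also have "\<dots> = (\<psi> a - \<psi> b) / L"
    using integral_unique[OF \<psi>'_int] by (simp add: divide_simps)
  finally have r_bound: "\<bar>integral {a..b} r\<bar> \<le> (\<psi> a - \<psi> b) / L" .
  have F_bound: "\<bar>F t\<bar> \<le> \<psi> t / L" if "0 \<le> \<psi> t" for t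
  proof -
    have "\<bar>F t\<bar> = \<bar>cos (L * h t)\<bar> * (\<psi> t / L)"
      using that \<open>0 < L\<close> by (simp add: F_def abs_mult abs_divide)
    also have "\<dots> \<le> \<psi> t / L"
      using that \<open>0 < L\<close> by (intro mult_left_le_one_le) auto
    finally show ?thesis .
  qed
  have "\<bar>F b\<bar> \<le> \<psi> b / L" and "\<bar>F a\<bar> \<le> \<psi> a / L"
    using F_bound \<psi>_b \<open>\<psi> b \<le> \<psi> a\<close> by auto
  with r_bound have "\<bar>F b - F a + integral {a..b} r\<bar> \<le> \<psi> b / L + \<psi> a / L + (\<psi> a - \<psi> b) / L"
    by arith
  also have "\<dots> = 2 * \<psi> a / L"
    using \<open>0 < L\<close> by (simp add: field_simps)
  finally show ?thesis
    unfolding integral_eq .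
qed

lemma integral_abs_between:
  fixes g :: "real \<Rightarrow> 'a::banach"
  assumes "0 \<le> a" and "g integrable_on {a..b}" and "(\<lambda>t. g (- t)) integrable_on {a..b}"
  shows "integral {t. a < \<bar>t\<bar> \<and> \<bar>t\<bar> < b} g = integral {a..b} (\<lambda>t. g t + g (- t))"
proof -
  have "integral {t. a < \<bar>t\<bar> \<and> \<bar>t\<bar> < b} g = integral ({-b..-a} \<union> {a..b}) g"
  proof (rule integral_spike_set)
    show "negligible {t \<in> {t. a < \<bar>t\<bar> \<and> \<bar>t\<bar> < b} - ({-b..-a} \<union> {a..b}). g t \<noteq> 0}"
      by (rule negligible_subset[of "{}"]) auto
    show "negligible {t \<in> ({-b..-a} \<union> {a..b}) - {t. a < \<bar>t\<bar> \<and> \<bar>t\<bar> < b}. g t \<noteq> 0}"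
      by (rule negligible_subset[OF negligible_finite[of "{-b, -a, a, b}"]])
        (use assms(1) in \<open>auto simp: abs_if\<close>)
  qed
  also have "\<dots> = integral {-b..-a} g + integral {a..b} g"
  proof (rule integral_Un)
    show "g integrable_on {-b..-a}"
      using Henstock_Kurzweil_Integration.integrable_reflect_real[where f = "\<lambda>t. g (- t)"] assms(3)
      by simp
    show "negligible ({-b..-a} \<inter> {a..b})"
      by (rule negligible_subset[OF negligible_sing[of 0]]) (use assms(1) in auto)
  qed (fact assms(2))
  also have "integral {-b..-a} g = integral {a..b} (\<lambda>t. g (- t))"
    using Henstock_Kurzweil_Integration.integral_reflect_real[where f = "\<lambda>t. g (- t)"] by simp
  finally show ?thesis
    using integral_add[OF assms(2,3)] by (simp add: add.commute)
qed

definition log_ratio :: "real \<Rightarrow> real \<Rightarrow> real" where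
  "log_ratio m t = ln (m + t) - ln (m - t)"

lemma log_ratio_minus [simp]: "log_ratio m (- t) = - log_ratio m t"
  by (simp add: log_ratio_def)

lemma continuous_on_log_ratio [continuous_intros]:
  assumes "continuous_on S f" and "\<And>x. x \<in> S \<Longrightarrow> \<bar>f x\<bar> < m"
  shows "continuous_on S (\<lambda>x. log_ratio m (f x))"
proof -
  have pos: "0 < m + f x" "0 < m - f x" if "x \<in> S" for x
    using assms(2)[OF that] by auto
  show ?thesis
    unfolding log_ratio_def by (intro continuous_intros assms(1)) (auto dest: pos)
qed

lemma has_real_derivative_log_ratio:
  assumes "\<bar>t\<bar> < m"
  shows "(log_ratio m has_real_derivative 2 * m / (m\<^sup>2 - t\<^sup>2)) (at t)"
proof -
  have "(log_ratio m has_real_derivative 1 / (m + t) + 1 / (m - t)) (at t)"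
    unfolding log_ratio_def using assms by (auto intro!: derivative_eq_intros)
  moreover have "1 / (m + t) + 1 / (m - t) = 2 * m / (m\<^sup>2 - t\<^sup>2)"
    using assms by (simp add: field_simps power2_eq_square)
  ultimately show ?thesis by simp
qed

lemma log_ratio_nonneg: "0 \<le> t \<Longrightarrow> t < m \<Longrightarrow> 0 \<le> log_ratio m t"
  by (simp add: log_ratio_def)

lemma log_ratio_le:
  assumes "0 \<le> t" and "t \<le> m / 2"
  shows "log_ratio m t \<le> 3 * t / m"
proof (cases "t = 0")
  case False
  with assms have "0 < t" "t < m" by auto
  have "ln (m + t) - ln m = ln ((m + t) / m)"
    using \<open>0 < t\<close> \<open>t < m\<close> by (simp add: ln_div)
  also have "\<dots> \<le> t / m"
    using ln_le_minus_one[of "(m + t) / m"] \<open>0 < t\<close> \<open>t < m\<close> by (simp add: field_simps)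
  finally have "ln (m + t) - ln m \<le> t / m" .
  moreover have "ln m - ln (m - t) = ln (m / (m - t))"
    using \<open>t < m\<close> \<open>0 < t\<close> by (simp add: ln_div)
  moreover have "\<dots> \<le> t / (m - t)"
    using ln_le_minus_one[of "m / (m - t)"] \<open>0 < t\<close> \<open>t < m\<close> by (simp add: field_simps)
  moreover have "t / (m - t) \<le> 2 * t / m"
    using assms \<open>t < m\<close> mult_left_mono[of "t * 2" m t] by (simp add: field_simps)
  ultimately show ?thesis
    unfolding log_ratio_def by (simp add: add_divide_distrib[symmetric])
qed (simp add: log_ratio_def)

lemma integrable_sin_log_ratio_div:
  assumes "0 < c"
  shows "(\<lambda>t. sin (L * log_ratio m t) / t) integrable_on {c..m}"
proof (rule integrable_on_Icc_if_bounded_continuous_on_Ioo)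
  show "continuous_on {c<..<m} (\<lambda>t. sin (L * log_ratio m t) / t)"
    using assms by (intro continuous_intros) auto
  fix t assume "t \<in> {c<..<m}"
  then show "norm (sin (L * log_ratio m t) / t) \<le> 1 / c"
    using assms by (auto simp: abs_divide intro!: frac_le)
qed

lemma sin_log_ratio_integral_initial:
  assumes "0 \<le> L" and "1 \<le> c" and "c \<le> m / 2"
  shows "\<bar>integral {1..c} (\<lambda>t. sin (L * log_ratio m t) / t)\<bar> \<le> 3 * L * c / m"
proof -
  have "norm (integral {1..c} (\<lambda>t. sin (L * log_ratio m t) / t)) \<le> 3 * L / m * (c - 1)"
  proof (rule integral_bound)
    show "continuous_on {1..c} (\<lambda>t. sin (L * log_ratio m t) / t)"
      using assms by (intro continuous_intros) auto
    fix t assume t: "t \<in> {1..c}"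
    have "\<bar>sin (L * log_ratio m t)\<bar> \<le> L * log_ratio m t"
      using abs_sin_x_le_abs_x[of "L * log_ratio m t"] log_ratio_nonneg[of t m] t assms
      by (simp add: abs_mult)
    also have "\<dots> \<le> L * (3 * t / m)"
      using log_ratio_le[of t m] t assms by (intro mult_left_mono) auto
    finally have "\<bar>sin (L * log_ratio m t)\<bar> / t \<le> L * (3 * t / m) / t"
      using t by (intro divide_right_mono) auto
    also have "\<dots> = 3 * L / m"
      using t by simp
    finally show "norm (sin (L * log_ratio m t) / t) \<le> 3 * L / m"
      using t by (simp add: abs_divide)
  qed (use assms in auto)
  also have "\<dots> \<le> 3 * L * c / m"
    using assms by (simp add: divide_right_mono mult_left_mono)
  finally show ?thesis by simp
qed

lemma sin_log_ratio_integral_middle: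
  assumes "0 < L" and "0 < a" and "a \<le> b" and "b < m"
  shows "\<bar>integral {a..b} (\<lambda>t. sin (L * log_ratio m t) / t)\<bar> \<le> m / (L * a)"
proof -
  \<comment> \<open>\<open>\<psi> t = 1 / (t * log_ratio' m t)\<close>, so that \<open>log_ratio' m t * \<psi> t = 1 / t\<close>\<close>
  define \<psi> where "\<psi> t = m / (2 * t) - t / (2 * m)" for t
  define \<psi>' where "\<psi>' t = - m / (2 * t\<^sup>2) - 1 / (2 * m)" for t
  have "\<bar>integral {a..b} (\<lambda>t. sin (L * log_ratio m t) * (2 * m / (m\<^sup>2 - t\<^sup>2)) * \<psi> t)\<bar>
      \<le> 2 * \<psi> a / L"
  proof (rule sin_oscillatory_integral_bound[where h' = "\<lambda>t. 2 * m / (m\<^sup>2 - t\<^sup>2)" and \<psi>' = \<psi>'])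
    fix t assume t: "t \<in> {a..b}"
    show "(log_ratio m has_real_derivative 2 * m / (m\<^sup>2 - t\<^sup>2)) (at t within {a..b})"
      using t assms by (intro has_field_derivative_at_within[OF has_real_derivative_log_ratio]) auto
    show "(\<psi> has_real_derivative \<psi>' t) (at t within {a..b})"
      unfolding \<psi>_def \<psi>'_def using t assms
      by (auto intro!: derivative_eq_intros simp: power2_eq_square)
    have "0 \<le> m / (2 * t\<^sup>2)" and "0 \<le> 1 / (2 * m)"
      using assms by auto
    then show "\<psi>' t \<le> 0"
      unfolding \<psi>'_def by linarith
  next
    show "continuous_on {a..b} \<psi>'"
      unfolding \<psi>'_def using assms by (intro continuous_intros) auto
    show "0 \<le> \<psi> b"
      unfolding \<psi>_def using assms mult_mono[of b m b m] by (simp add: field_simps)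
  qed (use assms in auto)
  moreover have "sin (L * log_ratio m t) * (2 * m / (m\<^sup>2 - t\<^sup>2)) * \<psi> t
      = sin (L * log_ratio m t) / t" if "t \<in> {a..b}" for t
  proof -
    have "t * t < m * m"
      using that assms mult_strict_mono[of t m t m] by auto
    then show ?thesis
      using that assms by (simp add: \<psi>_def field_simps power2_eq_square)
  qed
  then have "integral {a..b} (\<lambda>t. sin (L * log_ratio m t) * (2 * m / (m\<^sup>2 - t\<^sup>2)) * \<psi> t)
      = integral {a..b} (\<lambda>t. sin (L * log_ratio m t) / t)"
    by (rule integral_cong)
  moreover have "2 * \<psi> a / L \<le> m / (L * a)"
    using assms by (simp add: \<psi>_def field_simps)
  ultimately show ?thesis by simp
qed

lemma sin_log_ratio_integral_tail:
  assumes "0 < m"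
  shows "\<bar>integral {m/2..m} (\<lambda>t. sin (L * log_ratio m t) / t)\<bar> \<le> 1"
proof -
  have "norm (integral {m/2..m} (\<lambda>t. sin (L * log_ratio m t) / t)) \<le> 2 / m * (m - m/2)"
  proof (rule has_integral_bound_real[where S = "{}", THEN order_trans])
    show "((\<lambda>t. sin (L * log_ratio m t) / t)
        has_integral integral {m/2..m} (\<lambda>t. sin (L * log_ratio m t) / t)) {m/2..m}"
      using assms by (intro integrable_integral integrable_sin_log_ratio_div) simp
    fix t assume t: "t \<in> {m/2..m} - {}"
    then have "\<bar>sin (L * log_ratio m t)\<bar> / t \<le> 1 / t"
      using assms by (intro divide_right_mono) auto
    also have "\<dots> \<le> 2 / m"
      using t assms by (simp add: field_simps)
    finally show "norm (sin (L * log_ratio m t) / t) \<le> 2 / m"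
      using t assms by (simp add: abs_divide)
  qed (use assms in auto)
  then show ?thesis
    using assms by simp
qed

lemma sin_log_ratio_integral_bound:
  assumes "2 \<le> L" and "L \<le> m"
  shows "\<bar>integral {1..m} (\<lambda>t. sin (L * log_ratio m t) / t)\<bar> \<le> 5"
proof -
  define f where "f = (\<lambda>t. sin (L * log_ratio m t) / t)"
  define a where "a = m / L"
  have "1 \<le> a" and "a \<le> m / 2" and "0 < m"
    using assms by (auto simp: a_def field_simps)
  have f_int: "f integrable_on {1..m}"
    unfolding f_def by (rule integrable_sin_log_ratio_div) simp
  have "integral {1..m} f = integral {1..a} f + integral {a..m} f"
    using \<open>1 \<le> a\<close> \<open>a \<le> m / 2\<close> f_int
    by (intro Henstock_Kurzweil_Integration.integral_combine[symmetric]) auto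
  also have "integral {a..m} f = integral {a..m/2} f + integral {m/2..m} f"
    using \<open>1 \<le> a\<close> \<open>a \<le> m / 2\<close> integrable_on_subinterval[OF f_int, of a m]
    by (intro Henstock_Kurzweil_Integration.integral_combine[symmetric]) auto
  finally have
    "integral {1..m} f = integral {1..a} f + (integral {a..m/2} f + integral {m/2..m} f)" .
  moreover have "\<bar>integral {1..a} f\<bar> \<le> 3"
    using sin_log_ratio_integral_initial[of L a m] \<open>1 \<le> a\<close> \<open>a \<le> m / 2\<close> assms
    by (simp add: f_def a_def)
  moreover have "\<bar>integral {a..m/2} f\<bar> \<le> 1"
    using sin_log_ratio_integral_middle[of L a "m/2" m] \<open>1 \<le> a\<close> \<open>a \<le> m / 2\<close> assms
    by (simp add: f_def a_def)
  moreover have "\<bar>integral {m/2..m} f\<bar> \<le> 1"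
    using sin_log_ratio_integral_tail[OF \<open>0 < m\<close>] by (simp add: f_def)
  ultimately show ?thesis
    unfolding f_def by linarith
qed

lemma Im_diff_div_add_pos:
  fixes z :: complex
  assumes "0 < c" and "0 < Im z"
  shows "0 < Im ((z - of_real c) / (z + of_real c))"
proof -
  have "Im ((z - of_real c) / (z + of_real c)) = 2 * c * Im z / (cmod (z + of_real c))\<^sup>2"
    by (simp add: Im_divide cmod_power2 algebra_simps)
  moreover have "z + of_real c \<noteq> 0"
    using assms by (auto simp: complex_eq_iff)
  ultimately show ?thesis
    using assms by simp
qed

lemma W_upper_eq:
  assumes "0 < n" and "0 < Im z"
  shows "W_upper l n z = exp (- \<i> * of_real l * Ln ((of_nat n - z) / (of_nat n + z)))"
proof -
  define w where "w = (z - of_nat n) / (z + of_nat n)"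
  have "0 < Im w"
    using Im_diff_div_add_pos[of "real n" z] assms by (simp add: w_def)
  then have Ln_w: "Ln w = Ln (- w) + \<i> * pi"
    by (subst Ln_minus) auto
  have "W_upper l n z = exp (- of_real (l * pi) - \<i> * of_real l * Ln w)"
    by (simp add: W_upper_def w_def)
  also have "- of_real (l * pi) - \<i> * of_real l * Ln w = - \<i> * of_real l * Ln (- w)"
    unfolding Ln_w by (simp add: complex_eq_iff algebra_simps)
  also have "- w = (of_nat n - z) / (of_nat n + z)"
    by (simp add: w_def minus_divide_left add.commute)
  finally show ?thesis .
qed

lemma W_boundary_eq:
  assumes "0 < n" and "\<bar>t\<bar> < real n"
  shows "W_boundary l n t = exp (\<i> * of_real (l * log_ratio n t))"
proof -
  define q where
    "q \<epsilon> = (of_nat n - (of_real t + \<i> * of_real \<epsilon>)) / (of_nat n + (of_real t + \<i> * of_real \<epsilon>))"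
    for \<epsilon> :: real
  define G where "G \<epsilon> = exp (- \<i> * of_real l * Ln (q \<epsilon>))" for \<epsilon>
  have q0: "q 0 = of_real ((n - t) / (n + t))"
    by (simp add: q_def)
  have ratio_pos: "0 < (n - t) / (n + t)"
    using assms by (intro divide_pos_pos) auto
  have "of_nat n + of_real t \<noteq> (0::complex)"
  proof -
    have "0 < n + t"
      using assms by linarith
    then show ?thesis
      by (metis of_real_add of_real_of_nat_eq of_real_eq_0_iff less_irrefl)
  qed
  then have "isCont q 0"
    unfolding q_def by (intro continuous_intros) (simp add: add.commute)
  moreover have "q 0 \<notin> \<real>\<^sub>\<le>\<^sub>0"
    using ratio_pos by (simp add: q0 complex_nonpos_Reals_iff)
  ultimately have "isCont G 0"
    unfolding G_def by (intro continuous_intros isCont_Ln')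
  have "Ln (q 0) = of_real (ln ((n - t) / (n + t)))"
    unfolding q0 using ratio_pos by (rule Ln_of_real)
  also have "ln ((n - t) / (n + t)) = - log_ratio n t"
    using assms by (subst ln_div) (auto simp: log_ratio_def)
  finally have "G 0 = exp (\<i> * of_real (l * log_ratio n t))"
    by (simp add: G_def mult.assoc)
  with \<open>isCont G 0\<close> have "(G \<longlongrightarrow> exp (\<i> * of_real (l * log_ratio n t))) (at_right 0)"
    by (metis isCont_def filterlim_at_split)
  moreover have "\<forall>\<^sub>F \<epsilon> in at_right 0. G \<epsilon> = W_upper l n (of_real t + \<i> * of_real \<epsilon>)"
    using eventually_at_right_less[of "0::real"]
    by eventually_elim (simp add: G_def q_def W_upper_eq[OF assms(1)])
  ultimately show ?thesis
    unfolding W_boundary_def by (intro tendsto_Lim) (auto elim: Lim_transform_eventually)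
qed

lemma integral_W_boundary_div:
  assumes "1 \<le> n"
  shows "integral {t. 1 < \<bar>t\<bar> \<and> \<bar>t\<bar> < real n} (\<lambda>t. W_boundary L n t / of_real t)
    = 2 * \<i> * of_real (integral {1..real n} (\<lambda>t. sin (L * log_ratio n t) / t))"
proof -
  define g where "g t = exp (\<i> * of_real (L * log_ratio n t)) / of_real t" for t
  have g_int: "(\<lambda>t. g (c * t)) integrable_on {1..real n}" if "\<bar>c\<bar> = 1" for c
  proof (rule integrable_on_Icc_if_bounded_continuous_on_Ioo)
    show "continuous_on {1<..<real n} (\<lambda>t. g (c * t))"
      unfolding g_def using that by (intro continuous_intros) (auto simp: abs_mult)
    show "norm (g (c * t)) \<le> 1" if "t \<in> {1<..<real n}" for t
      using that \<open>\<bar>c\<bar> = 1\<close> by (simp add: g_def norm_divide norm_mult)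
  qed
  have "integral {t. 1 < \<bar>t\<bar> \<and> \<bar>t\<bar> < real n} (\<lambda>t. W_boundary L n t / of_real t)
      = integral {t. 1 < \<bar>t\<bar> \<and> \<bar>t\<bar> < real n} g"
    using assms by (intro integral_cong) (simp add: g_def W_boundary_eq)
  also have "\<dots> = integral {1..real n} (\<lambda>t. g t + g (- t))"
    using g_int[of 1] g_int[of "-1"] by (intro integral_abs_between) auto
  also have "\<dots> = integral {1..real n} (\<lambda>t. 2 * \<i> * of_real (sin (L * log_ratio n t) / t))"
  proof (rule integral_cong)
    fix t :: real
    have "exp (\<i> * of_real x) - exp (- (\<i> * of_real x)) = 2 * \<i> * of_real (sin x)" for x
      by (simp add: complex_eq_iff exp_eq_polar cis_conv_exp[symmetric])
    from this[of "L * log_ratio n t"]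
    show "g t + g (- t) = 2 * \<i> * of_real (sin (L * log_ratio n t) / t)"
      by (simp add: g_def diff_divide_distrib[symmetric])
  qed
  also have "\<dots> = 2 * \<i> * of_real (integral {1..real n} (\<lambda>t. sin (L * log_ratio n t) / t))"
    by (intro integral_unique has_integral_mult_right has_integral_of_real integrable_integral
        integrable_sin_log_ratio_div) simp
  finally show ?thesis .
qed

lemma norm_integral_W_boundary_div_le:
  assumes "2 \<le> L" and "L \<le> real n"
  shows "cmod (integral {t. 1 < \<bar>t\<bar> \<and> \<bar>t\<bar> < real n} (\<lambda>t. W_boundary L n t / of_real t)) \<le> 10"
proof -
  have "1 \<le> n"
    using assms by simp
  then show ?thesis
    using sin_log_ratio_integral_bound[OF assms]
    by (simp add: integral_W_boundary_div norm_mult)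
qed

theorem lemma5:
  fixes l R :: "nat \<Rightarrow> real"
  assumes l_pos: "\<And>n. l n > 0" and R_pos: "\<And>n. R n > 0"
    and l_inf: "filterlim l at_top sequentially"
    and R_inf: "filterlim R at_top sequentially"
    and l2n: "(\<lambda>n. (l n)^2 / real n) \<longlonglongrightarrow> 0"
    and nR: "(\<lambda>n. real n / R n) \<longlonglongrightarrow> 0"
    and expR: "(\<lambda>n. exp (- pi * l n / 2) * R n) \<longlonglongrightarrow> 0"
  shows "\<exists>C. \<forall>n. cmod (integral {t::real. 1 < \<bar>t\<bar> \<and> \<bar>t\<bar> < real n}
                  (\<lambda>t. W_boundary (l n) n t / complex_of_real t)) \<le> C"
proof -
  define I where "I n = cmod (integral {t::real. 1 < \<bar>t\<bar> \<and> \<bar>t\<bar> < real n}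
                  (\<lambda>t. W_boundary (l n) n t / complex_of_real t))" for n
  have "\<forall>\<^sub>F n in sequentially. 2 \<le> l n \<and> (l n)\<^sup>2 / real n < 1 \<and> 1 \<le> n"
    using l_inf order_tendstoD(2)[OF l2n, of 1]
    by (intro eventually_conj) (auto simp: filterlim_at_top eventually_ge_at_top)
  then have "\<forall>\<^sub>F n in sequentially. norm (I n) \<le> norm (10 :: real)"
  proof eventually_elim
    case (elim n)
    then have "l n \<le> (l n)\<^sup>2" and "(l n)\<^sup>2 < real n"
      by (auto simp: power2_eq_square divide_less_eq)
    then show ?case
      using norm_integral_W_boundary_div_le[of "l n" n] elim by (simp add: I_def)
  qed
  then have "Bseq I"
    by (rule Bseq_eventually_mono) simp
  then obtain K where "\<forall>n. norm (I n) \<le> K"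
    by (rule BseqE) blast
  then show ?thesis
    unfolding I_def by auto
qed

end
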